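(* One has $C^\perp=C^{\perp_{\mathbb{F}}}$ for every $A$-code $C$ if and only if either $m=1$ or $f(x)=x^2+ax-1$ for some $a\in\mathbb{F}$.
   Context: Let $\mathbb{F}$ be a finite field, $f(x)\in\mathbb{F}[x]$ monic of degree $m$, $A=\mathbb{F}[x]/\langle f(x)\rangle$, elements identified with polynomials of degree $<m$. An $A$-code of length $l$ is an $A$-submodule of $A^l$, and $C^\perp=\{a\in A^l:\sum_ia_ic_i=0\ \forall c\in C\}$ is its $A$-dual. Identify $g(x)=\sum_{i=0}^{m-1}a_ix^i\in A$ with $(a_0,\ldots,a_{m-1})\in\mathbb{F}^m$ and $A^l$ with $\mathbb{F}^{lm}$ by concatenation; the $\mathbb{F}$-dual $C^{\perp_{\mathbb{F}}}$ of $C$ is its dual with respect to the standard dot product on $\mathbb{F}^{lm}$, viewed as a subset of $A^l$. *)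

theory Defs
  imports "HOL-Computational_Algebra.Polynomial"
begin

text \<open>The ring A = F[x]/(f), with elements identified with polynomials of degree < m = degree f.\<close>
definition Aset :: "'a::field poly \<Rightarrow> 'a poly set" where
  "Aset f = {p. \<forall>i\<ge>degree f. coeff p i = 0}"

definition Avecs :: "'a::field poly \<Rightarrow> nat \<Rightarrow> (nat \<Rightarrow> 'a poly) set" where
  "Avecs f l = {v. (\<forall>i<l. v i \<in> Aset f) \<and> (\<forall>i\<ge>l. v i = 0)}"

definition is_A_code :: "'a::field poly \<Rightarrow> nat \<Rightarrow> (nat \<Rightarrow> 'a poly) set \<Rightarrow> bool" where
  "is_A_code f l C \<longleftrightarrow>
     C \<subseteq> Avecs f l \<and> (\<lambda>i. 0) \<in> C \<and>
     (\<forall>u\<in>C. \<forall>v\<in>C. (\<lambda>i. u i + v i) \<in> C) \<and>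
     (\<forall>a\<in>Aset f. \<forall>v\<in>C. (\<lambda>i. (a * v i) mod f) \<in> C)"

definition A_dual :: "'a::field poly \<Rightarrow> nat \<Rightarrow> (nat \<Rightarrow> 'a poly) set \<Rightarrow> (nat \<Rightarrow> 'a poly) set" where
  "A_dual f l C = {a \<in> Avecs f l. \<forall>c\<in>C. (\<Sum>i<l. a i * c i) mod f = 0}"

text \<open>F-dual: dual w.r.t. the standard dot product on F^(l m) (coefficient vectors concatenated).\<close>
definition F_dual :: "'a::field poly \<Rightarrow> nat \<Rightarrow> (nat \<Rightarrow> 'a poly) set \<Rightarrow> (nat \<Rightarrow> 'a poly) set" where
  "F_dual f l C = {a \<in> Avecs f l. \<forall>c\<in>C.
      (\<Sum>i<l. \<Sum>j<degree f. coeff (a i) j * coeff (c i) j) = 0}"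

end

theory Submission
  imports Defs
begin

text \<open>
  Write \<open>\<tau>(p)\<close> for the constant term of \<open>p \<in> A\<close>. The \<open>A\<close>-dual and the \<open>\<bbbF>\<close>-dual agree for all
  codes as soon as \<open>\<tau>(pq mod f)\<close> equals the coefficient dot product of \<open>p\<close> and \<open>q\<close>: one inclusion
  is then immediate, and for the other, multiplying a codeword by \<open>x\<^sup>k\<close> (which stays in the code)
  reads off the \<open>k\<close>-th coefficient of \<open>\<Sum>\<^sub>i a\<^sub>i c\<^sub>i mod f\<close>. This identity holds for linear \<open>f\<close> and
  for \<open>f = x\<^sup>2 + bx - 1\<close>, where \<open>x\<^sup>2 \<equiv> 1 - bx\<close>. Conversely, in the code
  \<open>{(t, xt mod f) | t \<in> A}\<close> the vector \<open>(-x, 1)\<close> is \<open>A\<close>-orthogonal to everything; \<open>\<bbbF>\<close>-orthogonality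
  to \<open>(x, x\<^sup>2 mod f)\<close> forces \<open>\<tau>(x\<^sup>2 mod f) = 1\<close>, which for monic \<open>f\<close> of degree \<open>\<ge> 2\<close> means
  \<open>f = x\<^sup>2 + bx - 1\<close>.
\<close>

definition coeff_dot :: "nat \<Rightarrow> 'a::comm_semiring_0 poly \<Rightarrow> 'a poly \<Rightarrow> 'a" where
  "coeff_dot m p q = (\<Sum>j<m. coeff p j * coeff q j)"

definition const_term_eq_dot :: "'a::field poly \<Rightarrow> bool" where
  "const_term_eq_dot f \<longleftrightarrow>
     (\<forall>p\<in>Aset f. \<forall>q\<in>Aset f. coeff ((p * q) mod f) 0 = coeff_dot (degree f) p q)"

lemma F_dual_coeff_dot:
  "F_dual f l C = {a \<in> Avecs f l. \<forall>c\<in>C. (\<Sum>i<l. coeff_dot (degree f) (a i) (c i)) = 0}"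
  by (simp add: F_dual_def coeff_dot_def)

lemma coeff_dot_monom_left:
  fixes q :: "'a::comm_semiring_1 poly"
  assumes "k < m"
  shows "coeff_dot m (monom 1 k) q = coeff q k"
proof -
  have "coeff_dot m (monom 1 k) q = (\<Sum>j<m. if k = j then coeff q j else 0)"
    unfolding coeff_dot_def coeff_monom by (rule sum.cong) auto
  then show ?thesis using assms by simp
qed

lemma Aset_iff_degree_less:
  fixes p f :: "'a::field poly"
  assumes "degree f \<ge> 1"
  shows "p \<in> Aset f \<longleftrightarrow> degree p < degree f"
proof
  assume "p \<in> Aset f"
  then have "degree p \<le> degree f - 1"
    by (intro degree_le) (auto simp: Aset_def)
  then show "degree p < degree f" using assms by linarith
qed (auto simp: Aset_def coeff_eq_0)

lemma mod_in_Aset: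
  fixes p f :: "'a::field poly"
  assumes "degree f \<ge> 1"
  shows "p mod f \<in> Aset f"
proof -
  have "f \<noteq> 0" using assms by auto
  then show ?thesis
    using assms by (cases "p mod f = 0") (auto simp: Aset_iff_degree_less[OF assms] degree_mod_less')
qed

lemma poly_mod_sum:
  fixes f :: "'a::field poly"
  shows "(\<Sum>i\<in>I. g i) mod f = (\<Sum>i\<in>I. g i mod f)"
  by (induction I rule: infinite_finite_induct) (auto simp: poly_mod_add_left)

lemma Aset_eq_0_iff_coeffs:
  fixes s f :: "'a::field poly"
  assumes "s \<in> Aset f"
  shows "s = 0 \<longleftrightarrow> (\<forall>k<degree f. coeff s k = 0)"
  using assms unfolding Aset_def poly_eq_iff by (auto simp: not_less) (metis not_less)

lemma const_term_sum_mod: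
  fixes f :: "'a::field poly"
  assumes "const_term_eq_dot f" "a \<in> Avecs f l" "c \<in> Avecs f l"
  shows "coeff ((\<Sum>i<l. a i * c i) mod f) 0 = (\<Sum>i<l. coeff_dot (degree f) (a i) (c i))"
  using assms by (simp add: poly_mod_sum coeff_sum const_term_eq_dot_def Avecs_def)

lemma sum_mult_mod_scaled:
  fixes f g :: "'a::field poly"
  shows "(\<Sum>i<l. a i * ((g * c i) mod f)) mod f = (g * ((\<Sum>i<l. a i * c i) mod f)) mod f"
proof -
  have "(\<Sum>i<l. a i * ((g * c i) mod f)) mod f = (\<Sum>i<l. (a i * ((g * c i) mod f)) mod f) mod f"
    by (simp add: mod_sum_eq)
  also have "\<dots> = (\<Sum>i<l. (g * (a i * c i)) mod f) mod f"
    by (simp add: mod_mult_right_eq ac_simps)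
  also have "\<dots> = (g * (\<Sum>i<l. a i * c i)) mod f"
    by (simp add: mod_sum_eq sum_distrib_left)
  finally show ?thesis by (simp add: mod_mult_right_eq)
qed

lemma A_dual_subset_F_dual:
  fixes f :: "'a::field poly"
  assumes "const_term_eq_dot f" and "C \<subseteq> Avecs f l"
  shows "A_dual f l C \<subseteq> F_dual f l C"
  using const_term_sum_mod[OF assms(1)] assms(2) by (force simp: A_dual_def F_dual_coeff_dot)

lemma F_dual_subset_A_dual:
  fixes f :: "'a::field poly"
  assumes deg: "degree f \<ge> 1" and form: "const_term_eq_dot f" and C: "is_A_code f l C"
  shows "F_dual f l C \<subseteq> A_dual f l C"
proof
  fix a assume aF: "a \<in> F_dual f l C"
  have a_vec: "a \<in> Avecs f l" using aF by (simp add: F_dual_def)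
  have C_vecs: "C \<subseteq> Avecs f l" using C by (simp add: is_A_code_def)
  have "(\<Sum>i<l. a i * c i) mod f = 0" if cC: "c \<in> C" for c
  proof -
    define s where "s = (\<Sum>i<l. a i * c i) mod f"
    have "coeff s k = 0" if k: "k < degree f" for k
    proof -
      define c' where "c' = (\<lambda>i. (monom 1 k * c i) mod f)"
      have x_pow: "monom 1 k \<in> Aset f" using k deg by (simp add: Aset_iff_degree_less degree_monom_eq)
      then have c'C: "c' \<in> C" using C cC unfolding c'_def is_A_code_def by blast
      have "coeff ((\<Sum>i<l. a i * c' i) mod f) 0 = 0"
        using const_term_sum_mod[OF form a_vec] aF c'C C_vecs by (auto simp: F_dual_coeff_dot)
      moreover have "(\<Sum>i<l. a i * c' i) mod f = (monom 1 k * s) mod f"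
        unfolding c'_def s_def by (rule sum_mult_mod_scaled)
      moreover have "coeff ((monom 1 k * s) mod f) 0 = coeff s k"
        using form k x_pow mod_in_Aset[OF deg]
        by (simp add: const_term_eq_dot_def s_def coeff_dot_monom_left)
      ultimately show ?thesis by simp
    qed
    then show ?thesis
      using Aset_eq_0_iff_coeffs[OF mod_in_Aset[OF deg]] unfolding s_def by blast
  qed
  then show "a \<in> A_dual f l C" using a_vec by (simp add: A_dual_def)
qed

lemma A_dual_eq_F_dual_if_const_term_eq_dot:
  fixes f :: "'a::field poly"
  assumes "degree f \<ge> 1" and "const_term_eq_dot f" and "is_A_code f l C"
  shows "A_dual f l C = F_dual f l C"
  using assms A_dual_subset_F_dual F_dual_subset_A_dual by (metis is_A_code_def subset_antisym)

lemma const_term_eq_dot_degree_1: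
  fixes f :: "'a::field poly"
  assumes "degree f = 1"
  shows "const_term_eq_dot f"
  unfolding const_term_eq_dot_def
proof (intro ballI)
  fix p q assume "p \<in> Aset f" "q \<in> Aset f"
  then have "degree p = 0" "degree q = 0" using assms by (auto simp: Aset_iff_degree_less)
  then have "degree (p * q) < degree f"
    using assms degree_mult_le[of p q] by linarith
  then show "coeff ((p * q) mod f) 0 = coeff_dot (degree f) p q"
    using assms by (simp add: mod_poly_less coeff_dot_def coeff_mult_0)
qed

lemma poly_eq_linear:
  fixes p :: "'a::zero poly"
  assumes "degree p < 2"
  shows "p = [:coeff p 0, coeff p 1:]"
  using assms by (auto simp: poly_eq_iff coeff_pCons less_2_cases_iff coeff_eq_0 split: nat.split)

lemma const_term_eq_dot_quadratic:
  fixes b :: "'a::field"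
  shows "const_term_eq_dot [:-1, b, 1:]"
  unfolding const_term_eq_dot_def
proof (intro ballI)
  define f where "f = [:-1, b, 1:]"
  fix p q assume "p \<in> Aset f" "q \<in> Aset f"
  then have "degree p < 2" "degree q < 2" by (simp_all add: Aset_iff_degree_less f_def)
  then obtain p0 p1 q0 q1 where p: "p = [:p0, p1:]" and q: "q = [:q0, q1:]"
    using poly_eq_linear by metis
  define r where "r = [:p0 * q0 + p1 * q1, p0 * q1 + p1 * q0 - b * p1 * q1:]"
  have "p * q = r + [:p1 * q1:] * f"
    unfolding p q r_def f_def by (simp add: algebra_simps)
  moreover have "degree r < degree f" by (simp add: r_def f_def)
  ultimately have "(p * q) mod f = r" by (simp only: mod_mult_self1 mod_poly_less)
  then show "coeff ((p * q) mod f) 0 = coeff_dot (degree f) p q"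
    by (simp add: r_def p q f_def coeff_dot_def numeral_2_eq_2)
qed

definition vec2 :: "'a::zero \<Rightarrow> 'a \<Rightarrow> nat \<Rightarrow> 'a" where
  "vec2 u v = (\<lambda>i. if i = 0 then u else if i = 1 then v else 0)"

definition graph_code :: "'a::field poly \<Rightarrow> 'a poly \<Rightarrow> (nat \<Rightarrow> 'a poly) set" where
  "graph_code f g = (\<lambda>t. vec2 t ((g * t) mod f)) ` Aset f"

lemma sum_vec2 [simp]: "(\<Sum>i<2. h (vec2 u v i) (vec2 u' v' i)) = h u u' + h v v'"
  by (simp add: vec2_def numeral_2_eq_2)

lemma is_A_code_graph_code:
  fixes f g :: "'a::field poly"
  assumes deg: "degree f \<ge> 1"
  shows "is_A_code f 2 (graph_code f g)"
  unfolding is_A_code_def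
proof (intro conjI ballI subsetI)
  fix v assume "v \<in> graph_code f g"
  then show "v \<in> Avecs f 2" using mod_in_Aset[OF deg]
    by (auto simp: graph_code_def Avecs_def vec2_def)
next
  show "(\<lambda>i. 0) \<in> graph_code f g" unfolding graph_code_def
    by (rule image_eqI[of _ _ 0]) (auto simp: vec2_def Aset_def)
next
  fix u v assume "u \<in> graph_code f g" "v \<in> graph_code f g"
  then obtain t s where "t \<in> Aset f" "u = vec2 t ((g * t) mod f)" "s \<in> Aset f" "v = vec2 s ((g * s) mod f)"
    by (auto simp: graph_code_def)
  then show "(\<lambda>i. u i + v i) \<in> graph_code f g" unfolding graph_code_def
    by (intro image_eqI[of _ _ "t + s"]) (auto simp: vec2_def Aset_def poly_mod_add_left distrib_left)
next
  fix a v assume "a \<in> Aset f" "v \<in> graph_code f g"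
  then obtain t where "v = vec2 t ((g * t) mod f)" by (auto simp: graph_code_def)
  moreover have "(a * ((g * t) mod f)) mod f = (g * ((a * t) mod f)) mod f"
    by (metis mod_mult_right_eq mult.left_commute)
  ultimately show "(\<lambda>i. (a * v i) mod f) \<in> graph_code f g" unfolding graph_code_def
    using mod_in_Aset[OF deg]
    by (intro image_eqI[of _ _ "(a * t) mod f"]) (auto simp: vec2_def)
qed

lemma vec2_in_A_dual_graph_code:
  fixes f g :: "'a::field poly"
  assumes "degree f \<ge> 1" "g \<in> Aset f"
  shows "vec2 (- g) 1 \<in> A_dual f 2 (graph_code f g)"
proof -
  have "vec2 (- g) 1 \<in> Avecs f 2"
    using assms by (auto simp: Avecs_def vec2_def Aset_def coeff_1)
  moreover have "(- g * t + 1 * ((g * t) mod f)) mod f = 0" for t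
    by (simp add: poly_mod_diff_left)
  ultimately show ?thesis by (auto simp: A_dual_def graph_code_def)
qed

lemma const_term_x_squared_mod_eq_1_if_duals_agree:
  fixes f :: "'a::field poly"
  assumes deg: "degree f \<ge> 2" and
    dual: "\<forall>l C. is_A_code f l C \<longrightarrow> A_dual f l C = F_dual f l C"
  shows "coeff ((monom 1 2) mod f) 0 = 1"
proof -
  define x :: "'a poly" where "x = monom 1 1"
  have x_A: "x \<in> Aset f" using deg by (simp add: x_def Aset_iff_degree_less degree_monom_eq)
  have "vec2 (- x) 1 \<in> F_dual f 2 (graph_code f x)"
    using dual is_A_code_graph_code vec2_in_A_dual_graph_code[OF _ x_A] deg by force
  moreover have "vec2 x ((x * x) mod f) \<in> graph_code f x"
    using x_A by (simp add: graph_code_def)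
  ultimately have "coeff_dot (degree f) (- x) x + coeff_dot (degree f) 1 ((x * x) mod f) = 0"
    by (force simp: F_dual_coeff_dot)
  moreover have "coeff_dot (degree f) (- x) x = - 1"
    using deg coeff_dot_monom_left[of 1 "degree f" "- x"] by (simp add: x_def coeff_dot_def)
  moreover have "coeff_dot (degree f) 1 ((x * x) mod f) = coeff ((monom 1 2) mod f) 0"
    using deg coeff_dot_monom_left[of 0 "degree f" "(monom 1 2) mod f"]
    by (simp add: x_def mult_monom numeral_2_eq_2)
  ultimately show ?thesis by (simp add: algebra_simps)
qed

lemma monic_quadratic_if_const_term_x_squared_mod_eq_1:
  fixes f :: "'a::field poly"
  assumes monic: "lead_coeff f = 1" and deg: "degree f \<ge> 2"
    and const: "coeff ((monom 1 2) mod f) 0 = 1"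
  shows "\<exists>b. f = [:-1, b, 1:]"
proof (cases "degree f = 2")
  case False
  then have "(monom 1 2 :: 'a poly) mod f = monom 1 2"
    using deg by (intro mod_poly_less) (simp add: degree_monom_eq)
  then show ?thesis using const by simp
next
  case True
  obtain f0 f1 where f: "f = [:f0, f1, 1:]"
  proof
    show "f = [:coeff f 0, coeff f 1, 1:]" using monic True
      by (auto simp: poly_eq_iff coeff_pCons coeff_eq_0 less_2_cases_iff numeral_2_eq_2 split: nat.split)
  qed
  have "monom 1 2 = [:- f0, - f1:] + 1 * f"
    by (simp add: f monom_altdef numeral_2_eq_2)
  moreover have "degree [:- f0, - f1:] < degree f" by (simp add: f)
  ultimately have "(monom 1 2 :: 'a poly) mod f = [:- f0, - f1:]"
    by (simp only: mod_mult_self1 mod_poly_less)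
  then have "f0 = -1" using const by (simp add: minus_equation_iff)
  then show ?thesis using f by blast
qed

theorem mainTheorem15:
  fixes f :: "'a::{finite,field} poly"
  assumes "lead_coeff f = 1" and "degree f \<ge> 1"
  shows "(\<forall>l C. is_A_code f l C \<longrightarrow> A_dual f l C = F_dual f l C)
     \<longleftrightarrow> (degree f = 1 \<or> (\<exists>a. f = [:-1, a, 1:]))"
proof
  assume dual: "\<forall>l C. is_A_code f l C \<longrightarrow> A_dual f l C = F_dual f l C"
  show "degree f = 1 \<or> (\<exists>a. f = [:-1, a, 1:])"
  proof (cases "degree f = 1")
    case False
    then have "degree f \<ge> 2" using assms(2) by linarith
    then show ?thesis
      using monic_quadratic_if_const_term_x_squared_mod_eq_1[OF assms(1)]
        const_term_x_squared_mod_eq_1_if_duals_agree[OF _ dual] by blast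
  qed simp
next
  assume "degree f = 1 \<or> (\<exists>a. f = [:-1, a, 1:])"
  then have "const_term_eq_dot f"
    using const_term_eq_dot_degree_1 const_term_eq_dot_quadratic by blast
  then show "\<forall>l C. is_A_code f l C \<longrightarrow> A_dual f l C = F_dual f l C"
    using A_dual_eq_F_dual_if_const_term_eq_dot[OF assms(2)] by blast
qed

end
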